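(* Let $\Gamma$ be a group and $\alpha\in\mathrm{End}(\Gamma)$. Then $G(\alpha)\cong G(\varprojlim\alpha)$.
   Context: $\{0,1\}^*$ denotes the set of finite words over $\{0,1\}$ (including the empty word $\epsilon$), and $\mathfrak C=\{0,1\}^{\mathbb N}$ the Cantor space. A finite complete prefix code is a finite set $\{t_1,\dots,t_n\}\subset\{0,1\}^*$ such that every $x\in\mathfrak C$ has exactly one $t_i$ as a prefix. Thompson's group $V$ is the group of homeomorphisms $v$ of $\mathfrak C$ for which there exist finite complete prefix codes $\{t_1,\dots,t_n\}$, $\{s_1,\dots,s_n\}$ and a permutation $\sigma$ with $v(t_iw)=s_{\sigma(i)}w$ for all $i$, $w\in\mathfrak C$. For a group $\Lambda$ and group morphism $\omega:\Lambda\times\Lambda\to\Lambda$, $K(\omega)$ is the group of maps $a:\{0,1\}^*\to\Lambda$ (pointwise product) with $a(u)=\omega(a(u0),a(u1))$ for all $u$; $V$ acts on it by $\pi(v)(a)(s_{\sigma(i)}u)=a(t_iu)$ for all $i$, $u\in\{0,1\}^*$ (this determines $\pi(v)(a)\in K(\omega)$ uniquely), and $G(\omega):=K(\omega)\rtimes V$ with $vav^{-1}=\pi(v)(a)$. For $\beta\in\mathrm{End}(\Lambda)$, $G(\beta):=G(\omega)$ with $\omega(g,h)=\beta(g)$. $\varprojlim\Gamma:=\{(g_n)\in\prod_{\mathbb N}\Gamma: g_n=\alpha(g_{n+1})\ \forall n\}$, and $\varprojlim\alpha:\varprojlim\Gamma\to\varprojlim\Gamma$, $(g_n)\mapsto(\alpha(g_n))$,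 which is an automorphism of $\varprojlim\Gamma$. *)

theory Defs
  imports "HOL-Analysis.Analysis" "HOL-Algebra.Algebra"
begin

text \<open>Words over {0,1} are bool lists (0 = False, 1 = True); the Cantor space is nat => bool.\<close>

type_synonym word = "bool list"
type_synonym cantor = "nat \<Rightarrow> bool"

definition cantor_top :: "cantor topology" where
  "cantor_top = product_topology (\<lambda>_::nat. discrete_topology (UNIV::bool set)) UNIV"

definition is_prefix :: "word \<Rightarrow> cantor \<Rightarrow> bool" where
  "is_prefix t x \<longleftrightarrow> (\<forall>i<length t. x i = t ! i)"

definition wconc :: "word \<Rightarrow> cantor \<Rightarrow> cantor" where
  "wconc t w = (\<lambda>i. if i < length t then t ! i else w (i - length t))"

definition complete_prefix_code :: "word set \<Rightarrow> bool" where
  "complete_prefix_code T \<longleftrightarrow> finite T \<and> (\<forall>x::cantor. \<exists>!t. t \<in> T \<and> is_prefix t x)"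

definition V_rep :: "(cantor \<Rightarrow> cantor) \<Rightarrow> word list \<Rightarrow> word list \<Rightarrow> (nat \<Rightarrow> nat) \<Rightarrow> bool" where
  "V_rep v ts ss \<sigma> \<longleftrightarrow> length ts = length ss \<and> distinct ts \<and> distinct ss \<and>
     complete_prefix_code (set ts) \<and> complete_prefix_code (set ss) \<and>
     bij_betw \<sigma> {..<length ts} {..<length ts} \<and>
     (\<forall>i<length ts. \<forall>w. v (wconc (ts ! i) w) = wconc (ss ! \<sigma> i) w)"

definition thompson_V :: "(cantor \<Rightarrow> cantor) set" where
  "thompson_V = {v. homeomorphic_map cantor_top cantor_top v \<and> (\<exists>ts ss \<sigma>. V_rep v ts ss \<sigma>)}"

definition K_set :: "('a, 'b) monoid_scheme \<Rightarrow> ('a \<Rightarrow> 'a \<Rightarrow> 'a) \<Rightarrow> (word \<Rightarrow> 'a) set" where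
  "K_set \<Lambda> \<omega> = {a. (\<forall>u. a u \<in> carrier \<Lambda>) \<and> (\<forall>u. a u = \<omega> (a (u @ [False])) (a (u @ [True])))}"

definition pi_V :: "('a, 'b) monoid_scheme \<Rightarrow> ('a \<Rightarrow> 'a \<Rightarrow> 'a) \<Rightarrow> (cantor \<Rightarrow> cantor)
    \<Rightarrow> (word \<Rightarrow> 'a) \<Rightarrow> (word \<Rightarrow> 'a)" where
  "pi_V \<Lambda> \<omega> v a = (THE b. b \<in> K_set \<Lambda> \<omega> \<and> (\<exists>ts ss \<sigma>. V_rep v ts ss \<sigma> \<and>
       (\<forall>i<length ts. \<forall>u. b (ss ! \<sigma> i @ u) = a (ts ! i @ u))))"

text \<open>G(omega) = K(omega) \<rtimes> V, with (a,v)(b,w) = (a \<cdot> pi(v)(b), v \<circ> w), so that v a v^-1 = pi(v)(a).\<close>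
definition G_omega :: "('a, 'b) monoid_scheme \<Rightarrow> ('a \<Rightarrow> 'a \<Rightarrow> 'a)
    \<Rightarrow> ((word \<Rightarrow> 'a) \<times> (cantor \<Rightarrow> cantor)) monoid" where
  "G_omega \<Lambda> \<omega> = \<lparr> carrier = K_set \<Lambda> \<omega> \<times> thompson_V,
     mult = (\<lambda>(a, v) (b, w). ((\<lambda>u. a u \<otimes>\<^bsub>\<Lambda>\<^esub> pi_V \<Lambda> \<omega> v b u), v \<circ> w)),
     one = ((\<lambda>u. \<one>\<^bsub>\<Lambda>\<^esub>), id) \<rparr>"

definition G_end :: "('a, 'b) monoid_scheme \<Rightarrow> ('a \<Rightarrow> 'a)
    \<Rightarrow> ((word \<Rightarrow> 'a) \<times> (cantor \<Rightarrow> cantor)) monoid" where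
  "G_end \<Lambda> \<beta> = G_omega \<Lambda> (\<lambda>g h. \<beta> g)"

definition invlim :: "('a, 'b) monoid_scheme \<Rightarrow> ('a \<Rightarrow> 'a) \<Rightarrow> (nat \<Rightarrow> 'a) monoid" where
  "invlim \<Gamma> \<alpha> = \<lparr> carrier = {g. (\<forall>n. g n \<in> carrier \<Gamma>) \<and> (\<forall>n. g n = \<alpha> (g (Suc n)))},
     mult = (\<lambda>g h n. g n \<otimes>\<^bsub>\<Gamma>\<^esub> h n),
     one = (\<lambda>n. \<one>\<^bsub>\<Gamma>\<^esub>) \<rparr>"

definition invlim_map :: "('a \<Rightarrow> 'a) \<Rightarrow> (nat \<Rightarrow> 'a) \<Rightarrow> (nat \<Rightarrow> 'a)" where
  "invlim_map \<alpha> g = (\<lambda>n. \<alpha> (g n))"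

end

theory Submission
  imports Defs
begin

text \<open>
  Since \<open>\<omega>(g, h) = \<alpha>(g)\<close> only looks at the left child, an element \<open>a\<close> of \<open>K(\<alpha>)\<close> satisfies
  \<open>a(u) = \<alpha>(a(u0))\<close>, so \<open>n \<mapsto> a(u 0\<^sup>n)\<close> is a point of \<open>\<Gamma>\<close>'s inverse limit. The map
  \<open>\<Phi>(a)(u) = (a(u 0\<^sup>n))\<^sub>n\<close> is a pointwise multiplicative bijection \<open>K(\<alpha>) \<rightarrow> K(lim \<alpha>)\<close>
  whose inverse reads off the \<open>0\<close>-th coordinate. It intertwines the actions of \<open>V\<close>, because
  \<open>\<pi>(v)(a)\<close> is characterised as the unique \<open>b \<in> K(\<omega>)\<close> with \<open>b(s_\<sigma>(i) u) = a(t_i u)\<close>, and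
  \<open>\<Phi>\<close> preserves this relation. Uniqueness holds since an element of \<open>K(\<omega>)\<close> is determined
  by its values on all sufficiently long words; existence, since every long word has a
  prefix in the code, so \<open>b\<close> can be prescribed on long words and extended upwards by \<open>\<omega>\<close>.
\<close>

lemma wconc_append: "wconc (p @ q) z = wconc p (wconc q z)"
  by (auto simp: wconc_def fun_eq_iff nth_append)

lemma wconc_cancel:
  assumes "\<And>z. wconc p z = wconc q z"
  shows "p = q"
proof -
  have len: "length p = length q"
  proof (rule ccontr)
    assume "length p \<noteq> length q"
    then consider "length p < length q" | "length q < length p" by linarith
    then show False
    proof cases
      case 1
      have "wconc p (\<lambda>_. \<not> q ! length p) (length p) = wconc q (\<lambda>_. \<not> q ! length p) (length p)"
        using assms by simp
      with 1 show False by (simp add: wconc_def)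
    next
      case 2
      have "wconc p (\<lambda>_. \<not> p ! length q) (length q) = wconc q (\<lambda>_. \<not> p ! length q) (length q)"
        using assms by simp
      with 2 show False by (simp add: wconc_def)
    qed
  qed
  show ?thesis
  proof (rule nth_equalityI[OF len])
    fix i assume "i < length p"
    moreover have "wconc p (\<lambda>_. False) i = wconc q (\<lambda>_. False) i" using assms by simp
    ultimately show "p ! i = q ! i" using len by (simp add: wconc_def)
  qed
qed

lemma is_prefix_wconc_append: "is_prefix t (wconc (t @ u) z)"
  by (simp add: is_prefix_def wconc_def nth_append)

lemma is_prefix_wconc_imp_append:
  assumes "is_prefix t (wconc W z)" "length t \<le> length W"
  shows "W = t @ drop (length t) W"
proof -
  have "take (length t) W = t"
  proof (rule nth_equalityI)
    show "length (take (length t) W) = length t" using assms(2) by simp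
    fix i assume "i < length (take (length t) W)"
    with assms show "take (length t) W ! i = t ! i"
      by (auto simp: is_prefix_def wconc_def)
  qed
  then show ?thesis by (metis append_take_drop_id)
qed

lemma complete_prefix_code_split:
  assumes "complete_prefix_code S" "Max (length ` S) \<le> length W"
  obtains s r where "s \<in> S" "W = s @ r"
proof -
  from assms(1) obtain s where s: "s \<in> S" "is_prefix s (wconc W (\<lambda>_. False))"
    unfolding complete_prefix_code_def by blast
  have "length s \<le> length W"
    using s(1) assms by (meson Max_ge complete_prefix_code_def finite_imageI image_eqI order_trans)
  with s that show thesis using is_prefix_wconc_imp_append by blast
qed

lemma complete_prefix_code_split_unique:
  assumes "complete_prefix_code S" "s \<in> S" "s' \<in> S" "s @ r = s' @ r'"
  shows "s = s'"
proof -
  let ?x = "wconc (s @ r) (\<lambda>_. False)"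
  have "is_prefix s ?x" "is_prefix s' ?x"
    using is_prefix_wconc_append assms(4) by metis+
  with assms(1-3) show ?thesis unfolding complete_prefix_code_def by blast
qed

lemma V_rep_split:
  assumes "V_rep v ts ss \<sigma>" "Max (length ` set ss) \<le> length W"
  obtains i r where "i < length ts" "W = ss ! \<sigma> i @ r"
proof -
  from assms(1) have cpc: "complete_prefix_code (set ss)" and len: "length ts = length ss"
    and bij: "bij_betw \<sigma> {..<length ts} {..<length ts}"
    by (auto simp: V_rep_def)
  obtain s r where "s \<in> set ss" "W = s @ r"
    using complete_prefix_code_split[OF cpc assms(2)] .
  moreover obtain j where "j < length ss" "s = ss ! j"
    using \<open>s \<in> set ss\<close> by (metis in_set_conv_nth)
  moreover obtain i where "i < length ts" "\<sigma> i = j"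
    using bij len \<open>j < length ss\<close> by (metis bij_betw_iff_bijections lessThan_iff)
  ultimately show thesis using that by blast
qed

lemma V_rep_split_unique:
  assumes "V_rep v ts ss \<sigma>" "i < length ts" "i' < length ts" "ss ! \<sigma> i @ r = ss ! \<sigma> i' @ r'"
  shows "i = i'" "r = r'"
proof -
  from assms(1) have cpc: "complete_prefix_code (set ss)" and len: "length ts = length ss"
    and bij: "bij_betw \<sigma> {..<length ts} {..<length ts}" and dist: "distinct ss"
    by (auto simp: V_rep_def)
  have \<sigma>: "\<sigma> i < length ss" "\<sigma> i' < length ss"
    using bij assms(2,3) len by (auto simp: bij_betw_def)
  then have "ss ! \<sigma> i = ss ! \<sigma> i'"
    using complete_prefix_code_split_unique[OF cpc _ _ assms(4)] by simp
  then have "\<sigma> i = \<sigma> i'" using dist \<sigma> nth_eq_iff_index_eq by blast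
  then show "i = i'" using bij assms(2,3) by (auto simp: bij_betw_def inj_on_def)
  then show "r = r'" using assms(4) by simp
qed

lemma thompson_V_inj: "v \<in> thompson_V \<Longrightarrow> inj v"
  by (simp add: thompson_V_def homeomorphic_map_def cantor_top_def topspace_product_topology
      PiE_UNIV_domain)

lemma V_rep_preimage_unique:
  assumes "inj v" "V_rep v ts ss \<sigma>" "V_rep v ts' ss' \<sigma>'" "i < length ts" "i' < length ts'"
    "ss ! \<sigma> i @ r = ss' ! \<sigma>' i' @ r'"
  shows "ts ! i @ r = ts' ! i' @ r'"
proof (rule wconc_cancel)
  fix z
  have "v (wconc (ts ! i @ r) z) = wconc (ss ! \<sigma> i @ r) z"
    using assms(2,4) by (simp add: V_rep_def wconc_append)
  also have "\<dots> = v (wconc (ts' ! i' @ r') z)"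
    using assms(3,5,6) by (simp add: V_rep_def wconc_append)
  finally show "wconc (ts ! i @ r) z = wconc (ts' ! i' @ r') z"
    using assms(1) by (simp add: inj_eq)
qed

text \<open>
  Only meaningful on words having a prefix in \<open>ss\<close>, e.g. on all words of length at least
  \<open>Max (length ` set ss)\<close>; elsewhere \<open>THE\<close> returns an unspecified word.
\<close>
definition word_preimage :: "word list \<Rightarrow> word list \<Rightarrow> (nat \<Rightarrow> nat) \<Rightarrow> word \<Rightarrow> word" where
  "word_preimage ts ss \<sigma> W = (THE y. \<exists>i r. i < length ts \<and> W = ss ! \<sigma> i @ r \<and> y = ts ! i @ r)"

lemma word_preimage_eq:
  assumes "V_rep v ts ss \<sigma>" "i < length ts"
  shows "word_preimage ts ss \<sigma> (ss ! \<sigma> i @ u) = ts ! i @ u"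
  unfolding word_preimage_def
  using assms V_rep_split_unique[OF assms(1,2)] by (intro the_equality) blast+

lemma K_setI:
  "(\<And>u. a u \<in> carrier \<Lambda>) \<Longrightarrow> (\<And>u. a u = \<omega> (a (u @ [False])) (a (u @ [True])))
    \<Longrightarrow> a \<in> K_set \<Lambda> \<omega>"
  unfolding K_set_def by blast

lemma K_setD:
  assumes "a \<in> K_set \<Lambda> \<omega>"
  shows K_set_carrier: "a u \<in> carrier \<Lambda>"
    and K_set_split: "a u = \<omega> (a (u @ [False])) (a (u @ [True]))"
  using assms unfolding K_set_def by blast+

lemma K_set_shift: "a \<in> K_set \<Lambda> \<omega> \<Longrightarrow> (\<lambda>u. a (p @ u)) \<in> K_set \<Lambda> \<omega>"
  by (rule K_setI) (auto intro: K_set_carrier K_set_split[where u = "p @ _", simplified])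

lemma K_set_eqI:
  assumes a: "a \<in> K_set \<Lambda> \<omega>" and b: "b \<in> K_set \<Lambda> \<omega>"
    and long: "\<And>u. N \<le> length u \<Longrightarrow> a u = b u"
  shows "a = b"
proof
  have "a u = b u" if "N - length u = k" for k u
    using that
  proof (induction k arbitrary: u)
    case 0
    then show ?case using long by simp
  next
    case (Suc k)
    then have "a (u @ [c]) = b (u @ [c])" for c by simp
    then show ?case using K_set_split[OF a, of u] K_set_split[OF b, of u] by simp
  qed
  then show "a u = b u" for u by blast
qed

primrec tree_extend :: "('a \<Rightarrow> 'a \<Rightarrow> 'a) \<Rightarrow> (word \<Rightarrow> 'a) \<Rightarrow> nat \<Rightarrow> word \<Rightarrow> 'a" where
  "tree_extend \<omega> f 0 w = f w"
| "tree_extend \<omega> f (Suc k) w =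
     \<omega> (tree_extend \<omega> f k (w @ [False])) (tree_extend \<omega> f k (w @ [True]))"

lemma K_set_tree_extend:
  assumes closed: "\<And>x y. x \<in> carrier \<Lambda> \<Longrightarrow> y \<in> carrier \<Lambda> \<Longrightarrow> \<omega> x y \<in> carrier \<Lambda>"
    and carr: "\<And>u. f u \<in> carrier \<Lambda>"
    and rel: "\<And>u. N \<le> length u \<Longrightarrow> f u = \<omega> (f (u @ [False])) (f (u @ [True]))"
  shows "(\<lambda>w. tree_extend \<omega> f (N - length w) w) \<in> K_set \<Lambda> \<omega>"
proof -
  have "tree_extend \<omega> f k w \<in> carrier \<Lambda>" for k w
    by (induction k arbitrary: w) (simp_all add: carr closed)
  moreover have "tree_extend \<omega> f (N - length u) u =
      \<omega> (tree_extend \<omega> f (N - length (u @ [False])) (u @ [False]))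
        (tree_extend \<omega> f (N - length (u @ [True])) (u @ [True]))" for u
  proof (cases "N \<le> length u")
    case True
    then show ?thesis using rel[OF True] by simp
  next
    case False
    then have "N - length u = Suc (N - length (u @ [c]))" for c by simp
    then show ?thesis by simp
  qed
  ultimately show ?thesis by (intro K_setI)
qed

definition V_transports ::
    "word list \<Rightarrow> word list \<Rightarrow> (nat \<Rightarrow> nat) \<Rightarrow> (word \<Rightarrow> 'a) \<Rightarrow> (word \<Rightarrow> 'a) \<Rightarrow> bool" where
  "V_transports ts ss \<sigma> a b \<longleftrightarrow> (\<forall>i<length ts. \<forall>u. b (ss ! \<sigma> i @ u) = a (ts ! i @ u))"

lemma V_transports_unique:
  assumes "inj v" and rep: "V_rep v ts ss \<sigma>" and rep': "V_rep v ts' ss' \<sigma>'"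
    and b: "b \<in> K_set \<Lambda> \<omega>" and b': "b' \<in> K_set \<Lambda> \<omega>"
    and tr: "V_transports ts ss \<sigma> a b" and tr': "V_transports ts' ss' \<sigma>' a b'"
  shows "b = b'"
proof (rule K_set_eqI[OF b b'])
  fix W :: word
  assume "max (Max (length ` set ss)) (Max (length ` set ss')) \<le> length W"
  then obtain i r i' r' where i: "i < length ts" "W = ss ! \<sigma> i @ r"
    and i': "i' < length ts'" "W = ss' ! \<sigma>' i' @ r'"
    using V_rep_split[OF rep] V_rep_split[OF rep'] by (metis max.bounded_iff)
  have "b W = a (ts ! i @ r)" using tr i by (simp add: V_transports_def)
  also have "\<dots> = a (ts' ! i' @ r')"
    using V_rep_preimage_unique[OF \<open>inj v\<close> rep rep' i(1) i'(1)] i(2) i'(2) by metis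
  also have "\<dots> = b' W" using tr' i' by (simp add: V_transports_def)
  finally show "b W = b' W" .
qed

lemma V_transports_exists:
  assumes closed: "\<And>x y. x \<in> carrier \<Lambda> \<Longrightarrow> y \<in> carrier \<Lambda> \<Longrightarrow> \<omega> x y \<in> carrier \<Lambda>"
    and a: "a \<in> K_set \<Lambda> \<omega>" and rep: "V_rep v ts ss \<sigma>"
  obtains b where "b \<in> K_set \<Lambda> \<omega>" "V_transports ts ss \<sigma> a b"
proof -
  define N where "N = Max (length ` set ss)"
  define f where "f = a \<circ> word_preimage ts ss \<sigma>"
  have f: "f (ss ! \<sigma> i @ u) = a (ts ! i @ u)" if "i < length ts" for i u
    using word_preimage_eq[OF rep that] by (simp add: f_def)
  have "f u = \<omega> (f (u @ [False])) (f (u @ [True]))" if long: "N \<le> length u" for u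
  proof -
    obtain i r where "i < length ts" "u = ss ! \<sigma> i @ r"
      using V_rep_split[OF rep long[unfolded N_def]] .
    then show ?thesis using f K_set_split[OF a, of "ts ! i @ r"] by simp
  qed
  moreover have "f u \<in> carrier \<Lambda>" for u using K_set_carrier[OF a] by (simp add: f_def)
  ultimately have b: "(\<lambda>w. tree_extend \<omega> f (N - length w) w) \<in> K_set \<Lambda> \<omega>" (is "?b \<in> _")
    using K_set_tree_extend[of \<Lambda> \<omega> f N] closed by blast
  have "V_transports ts ss \<sigma> a ?b"
    unfolding V_transports_def
  proof (intro allI impI)
    fix i u assume i: "i < length ts"
    have "(\<lambda>u. ?b (ss ! \<sigma> i @ u)) = (\<lambda>u. a (ts ! i @ u))"
      using K_set_shift[OF b] K_set_shift[OF a]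
      by (rule K_set_eqI[where N = N]) (simp add: f[OF i])
    then show "?b (ss ! \<sigma> i @ u) = a (ts ! i @ u)" by (rule fun_cong)
  qed
  with b that show thesis by blast
qed

lemma pi_V_eqI:
  assumes v: "v \<in> thompson_V" and rep: "V_rep v ts ss \<sigma>"
    and b: "b \<in> K_set \<Lambda> \<omega>" and tr: "V_transports ts ss \<sigma> a b"
  shows "pi_V \<Lambda> \<omega> v a = b"
  unfolding pi_V_def V_transports_def[symmetric]
proof (rule the_equality)
  show "b \<in> K_set \<Lambda> \<omega> \<and> (\<exists>ts ss \<sigma>. V_rep v ts ss \<sigma> \<and> V_transports ts ss \<sigma> a b)"
    using b rep tr by blast
  show "b' = b" if "b' \<in> K_set \<Lambda> \<omega> \<and> (\<exists>ts ss \<sigma>. V_rep v ts ss \<sigma> \<and> V_transports ts ss \<sigma> a b')"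
    for b'
    using that V_transports_unique[OF thompson_V_inj[OF v] _ rep _ b _ tr] by blast
qed

lemma pi_V_transports:
  assumes closed: "\<And>x y. x \<in> carrier \<Lambda> \<Longrightarrow> y \<in> carrier \<Lambda> \<Longrightarrow> \<omega> x y \<in> carrier \<Lambda>"
    and v: "v \<in> thompson_V" and rep: "V_rep v ts ss \<sigma>" and a: "a \<in> K_set \<Lambda> \<omega>"
  shows "pi_V \<Lambda> \<omega> v a \<in> K_set \<Lambda> \<omega>" "V_transports ts ss \<sigma> a (pi_V \<Lambda> \<omega> v a)"
proof -
  obtain b where b: "b \<in> K_set \<Lambda> \<omega>" "V_transports ts ss \<sigma> a b"
    using V_transports_exists[OF closed a rep] .
  with pi_V_eqI[OF v rep b] show "pi_V \<Lambda> \<omega> v a \<in> K_set \<Lambda> \<omega>"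
    "V_transports ts ss \<sigma> a (pi_V \<Lambda> \<omega> v a)"
    by simp_all
qed

lemma carrier_invlim:
  "carrier (invlim \<Gamma> \<alpha>) = {g. (\<forall>n. g n \<in> carrier \<Gamma>) \<and> (\<forall>n. g n = \<alpha> (g (Suc n)))}"
  by (simp add: invlim_def)

lemma invlim_carrierI:
  "(\<And>n. g n \<in> carrier \<Gamma>) \<Longrightarrow> (\<And>n. g n = \<alpha> (g (Suc n))) \<Longrightarrow> g \<in> carrier (invlim \<Gamma> \<alpha>)"
  unfolding carrier_invlim by blast

lemma invlim_carrierD:
  assumes "g \<in> carrier (invlim \<Gamma> \<alpha>)"
  shows invlim_carrier_component: "g n \<in> carrier \<Gamma>"
    and invlim_carrier_compatible: "g n = \<alpha> (g (Suc n))"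
  using assms unfolding carrier_invlim by blast+

definition K_to_invlim :: "(word \<Rightarrow> 'a) \<Rightarrow> word \<Rightarrow> nat \<Rightarrow> 'a" where
  "K_to_invlim a = (\<lambda>u n. a (u @ replicate n False))"

definition K_of_invlim :: "(word \<Rightarrow> nat \<Rightarrow> 'a) \<Rightarrow> word \<Rightarrow> 'a" where
  "K_of_invlim b = (\<lambda>u. b u 0)"

lemma K_to_invlim_mem:
  assumes a: "a \<in> K_set \<Gamma> (\<lambda>g h. \<alpha> g)"
  shows "K_to_invlim a \<in> K_set (invlim \<Gamma> \<alpha>) (\<lambda>g h. invlim_map \<alpha> g)"
proof (rule K_setI)
  have split: "a (u @ replicate n False) = \<alpha> (a ((u @ [False]) @ replicate n False))" for u n
  proof -
    have "(u @ [False]) @ replicate n False = (u @ replicate n False) @ [False]"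
      by (simp add: replicate_append_same)
    then show ?thesis using K_set_split[OF a, of "u @ replicate n False"] by (simp only:)
  qed
  show "K_to_invlim a u \<in> carrier (invlim \<Gamma> \<alpha>)" for u
    unfolding K_to_invlim_def by (rule invlim_carrierI) (rule K_set_carrier[OF a], simp add: split)
  show "K_to_invlim a u = invlim_map \<alpha> (K_to_invlim a (u @ [False]))" for u
    unfolding K_to_invlim_def invlim_map_def by (rule ext, rule split)
qed

lemma K_of_invlim_mem:
  assumes b: "b \<in> K_set (invlim \<Gamma> \<alpha>) (\<lambda>g h. invlim_map \<alpha> g)"
  shows "K_of_invlim b \<in> K_set \<Gamma> (\<lambda>g h. \<alpha> g)"
proof (rule K_setI)
  show "K_of_invlim b u \<in> carrier \<Gamma>" for u
    unfolding K_of_invlim_def by (rule invlim_carrier_component[OF K_set_carrier[OF b]])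
  show "K_of_invlim b u = \<alpha> (K_of_invlim b (u @ [False]))" for u
    using K_set_split[OF b, of u] by (simp add: K_of_invlim_def invlim_map_def)
qed

lemma K_of_invlim_K_to_invlim [simp]: "K_of_invlim (K_to_invlim a) = a"
  by (simp add: K_of_invlim_def K_to_invlim_def)

lemma K_to_invlim_K_of_invlim:
  assumes b: "b \<in> K_set (invlim \<Gamma> \<alpha>) (\<lambda>g h. invlim_map \<alpha> g)"
  shows "K_to_invlim (K_of_invlim b) = b"
proof -
  have shift: "b (u @ [False]) n = b u (Suc n)" for u n
  proof -
    have "b u (Suc n) = \<alpha> (b (u @ [False]) (Suc n))"
      using K_set_split[OF b, of u] by (simp add: invlim_map_def)
    also have "\<dots> = b (u @ [False]) n"
      by (rule invlim_carrier_compatible[OF K_set_carrier[OF b], symmetric])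
    finally show ?thesis by simp
  qed
  have "b (u @ replicate n False) 0 = b u n" for u n
  proof (induction n arbitrary: u)
    case 0
    then show ?case by simp
  next
    case (Suc n)
    have "b (u @ replicate (Suc n) False) 0 = b ((u @ [False]) @ replicate n False) 0" by simp
    also have "\<dots> = b u (Suc n)" using Suc.IH[of "u @ [False]"] shift[of u n] by simp
    finally show ?case .
  qed
  then show ?thesis by (simp add: K_to_invlim_def K_of_invlim_def)
qed

lemma K_to_invlim_mult:
  "K_to_invlim (\<lambda>u. a u \<otimes>\<^bsub>\<Gamma>\<^esub> c u)
    = (\<lambda>u. K_to_invlim a u \<otimes>\<^bsub>invlim \<Gamma> \<alpha>\<^esub> K_to_invlim c u)"
  by (simp add: K_to_invlim_def invlim_def)

lemma V_transports_K_to_invlim: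
  "V_transports ts ss \<sigma> a b \<Longrightarrow> V_transports ts ss \<sigma> (K_to_invlim a) (K_to_invlim b)"
  by (simp add: V_transports_def K_to_invlim_def)

lemma pi_V_K_to_invlim:
  assumes closed: "\<And>x. x \<in> carrier \<Gamma> \<Longrightarrow> \<alpha> x \<in> carrier \<Gamma>"
    and v: "v \<in> thompson_V" and a: "a \<in> K_set \<Gamma> (\<lambda>g h. \<alpha> g)"
  shows "K_to_invlim (pi_V \<Gamma> (\<lambda>g h. \<alpha> g) v a)
    = pi_V (invlim \<Gamma> \<alpha>) (\<lambda>g h. invlim_map \<alpha> g) v (K_to_invlim a)"
proof -
  obtain ts ss \<sigma> where rep: "V_rep v ts ss \<sigma>" using v by (auto simp: thompson_V_def)
  have "\<And>x y. x \<in> carrier \<Gamma> \<Longrightarrow> y \<in> carrier \<Gamma> \<Longrightarrow> \<alpha> x \<in> carrier \<Gamma>" by (rule closed)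
  note p = pi_V_transports[OF this v rep a]
  show ?thesis
    by (rule pi_V_eqI[OF v rep K_to_invlim_mem[OF p(1)] V_transports_K_to_invlim[OF p(2)], symmetric])
qed

lemma K_to_invlim_iso:
  assumes closed: "\<And>x. x \<in> carrier \<Gamma> \<Longrightarrow> \<alpha> x \<in> carrier \<Gamma>"
  shows "(\<lambda>(a, v). (K_to_invlim a, v)) \<in> iso (G_end \<Gamma> \<alpha>) (G_end (invlim \<Gamma> \<alpha>) (invlim_map \<alpha>))"
proof (rule isoI)
  let ?h = "\<lambda>(a, v). (K_to_invlim a, v)"
  let ?G = "G_end \<Gamma> \<alpha>" and ?H = "G_end (invlim \<Gamma> \<alpha>) (invlim_map \<alpha>)"
  show "bij_betw ?h (carrier ?G) (carrier ?H)"
    by (rule bij_betwI[where g = "\<lambda>(b, v). (K_of_invlim b, v)"])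
      (auto simp: G_end_def G_omega_def K_to_invlim_mem K_of_invlim_mem K_to_invlim_K_of_invlim)
  show "?h \<in> hom ?G ?H"
  proof (rule homI)
    fix x y assume x: "x \<in> carrier ?G" and y: "y \<in> carrier ?G"
    then show "?h x \<in> carrier ?H"
      by (auto simp: G_end_def G_omega_def K_to_invlim_mem)
    obtain a v b w where xy: "x = (a, v)" "y = (b, w)" by fastforce
    with x y have "v \<in> thompson_V" "b \<in> K_set \<Gamma> (\<lambda>g h. \<alpha> g)"
      by (auto simp: G_end_def G_omega_def)
    with xy show "?h (x \<otimes>\<^bsub>?G\<^esub> y) = ?h x \<otimes>\<^bsub>?H\<^esub> ?h y"
      by (simp add: G_end_def G_omega_def K_to_invlim_mult[where \<alpha> = \<alpha>] pi_V_K_to_invlim[OF closed])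
  qed
qed

theorem mainTheorem3:
  fixes \<Gamma> :: "('a, 'b) monoid_scheme" and \<alpha> :: "'a \<Rightarrow> 'a"
  assumes "group \<Gamma>" and "\<alpha> \<in> hom \<Gamma> \<Gamma>"
  shows "G_end \<Gamma> \<alpha> \<cong> G_end (invlim \<Gamma> \<alpha>) (invlim_map \<alpha>)"
  using K_to_invlim_iso[OF hom_in_carrier[OF assms(2)]] by (rule is_isoI)

end
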